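(* Let $G$ be a group and let $(\Gamma,\psi)$ be a $G$-gain graph on $n$ vertices. Let $\alpha=\{C_0,C_1,\dots,C_{2k}\}$ be a $G$-WQH partition of the vertex set of $\Gamma$, let $(\Gamma^\alpha,\psi^\alpha)$ be the gain graph obtained from $(\Gamma,\psi)$ and $\alpha$ as described in the context, and let $Q_\alpha$ be the matrix associated with $\alpha$. Then, with vertices ordered as $C_0,C_1,C_2,\dots,C_{2k}$, $$A_{(\Gamma^\alpha,\psi^\alpha)}=Q_\alpha A_{(\Gamma,\psi)}Q_\alpha.$$ In particular, $(\Gamma,\psi)$ and $(\Gamma^\alpha,\psi^\alpha)$ are $G$-cospectral.
   Context: A $G$-gain graph $(\Gamma,\psi)$ consists of a directed graph $\Gamma=(V,A)$ in which every arc $(u,w)$ has its reverse $(w,u)$ (no loops), and a gain function $\psi:A\to G$ with $\psi(w,u)=\psi(u,w)^{-1}$. Set $\psi(v,w)=0\in\mathbb{C}G$ when $v,w$ are not adjacent. For $V=\{v_1,\dots,v_n\}$, the adjacency matrix $A_{(\Gamma,\psi)}\in M_n(\mathbb{C}G)$ has $(i,j)$ entry $\psi(v_i,v_j)$ if $v_i\sim v_j$ and $0$ otherwise; here $\mathbb{C}G$ is the complex group algebra with neutral element $1_G$. Given a partition $\alpha=\{C_0,C_1,\dots,C_{2k}\}$ of $V$, for a vertex $v$ let $\Psi_i(v)=\sum_{w\in C_i,\,w\sim v}\psi(v,w)\in\mathbb{C}G$. The partition is a $G$-WQH partition if: (1) $|C_i|=|C_{i+1}|$ for every odd $i<2k$;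 (2) for $i,j\in\{1,\dots,2k\}$ and $v,v'\in C_i$, $\Psi_j(v)=\Psi_j(v')$; (3) for odd $i,j<2k$ and $v\in C_i$, $v'\in C_{i+1}$, $\Psi_j(v)=\Psi_{j+1}(v')$ and $\Psi_{j+1}(v)=\Psi_j(v')$; (4) for every $v\in C_0$ and every odd $i<2k$, either (a) $\Psi_i(v)=\Psi_{i+1}(v)$, or (b) $\Psi_i(v)=|C_i|g_1$ and $\Psi_{i+1}(v)=|C_{i+1}|g_2$ for some distinct $g_1,g_2\in G\cup\{0\}\subset\mathbb{C}G$ (i.e. $v$ is joined to all of $C_i$ with gain $g_1$, or to none if $g_1=0$, and likewise to $C_{i+1}$ with $g_2$). The gain graph $(\Gamma^\alpha,\psi^\alpha)$ on the same vertex set is defined by (with $\psi^\alpha(v,w)=0$ meaning non-adjacency): $\psi^\alpha(v,w)=\psi(v,w)$ for $v,w\in C_1\cup\dots\cup C_{2k}$; $\psi^\alpha(v,w)=\psi(v,w)$ for $v,w\in C_0$; for $v\in C_0$ and odd $i<2k$ with $\Psi_i(v)=\Psi_{i+1}(v)$, $\psi^\alpha(v,w)=\psi(v,w)$ for $w\in C_i\cup C_{i+1}$; for $v\in C_0$ and odd $i<2k$ in case (b) with $g_1,g_2$, $\psi^\alpha(v,w)=g_2$ for $w\in C_i$ and $\psi^\alpha(v,w)=g_1$ for $w\in C_{i+1}$ (gains of reversed arcs are the inverses). For $m\ge1$ let $Q_m=\begin{pmatrix} I_m-\frac1m J_m & \frac1m J_m\\ \frac1m J_m & I_m-\frac1m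 J_m\end{pmatrix}\in M_{2m}(\mathbb{C}G)$, where $I_m$ is the identity (diagonal entries $1_G$) and $J_m$ the all-$1_G$ matrix. With $m_t=|C_{2t-1}|=|C_{2t}|$ for $t=1,\dots,k$, define the block-diagonal matrix $Q_\alpha=\mathrm{diag}(I_{|C_0|},Q_{m_1},\dots,Q_{m_k})\in M_n(\mathbb{C}G)$. For $a=\sum_x a_x x\in\mathbb{C}G$, let $\mu(a)$ be the class function on $G$ given by $\mu(a)(g)=\sum_{x\in[g]}a_x$, where $[g]$ is the conjugacy class of $g$. Two matrices $A,B\in M_n(\mathbb{C}G)$ are $G$-cospectral if $\mu(\mathrm{Tr}(A^h))=\mu(\mathrm{Tr}(B^h))$ for every positive integer $h$, where $\mathrm{Tr}$ is the sum of diagonal entries in $\mathbb{C}G$; two $G$-gain graphs are $G$-cospectral if their adjacency matrices are. *)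

theory Defs
  imports Complex_Main "HOL-Library.Poly_Mapping" "Jordan_Normal_Form.Matrix"
begin

text \<open>The group G is a type of class group_add (group written additively; it is NOT
assumed commutative). The complex group algebra CG is the monoid algebra
'g =>0 complex (finitely supported functions with convolution product);
its neutral element 1_G is the unit 1 of this ring.\<close>

type_synonym 'g cg = "'g \<Rightarrow>\<^sub>0 complex"

definition cg_elem :: "'g::group_add \<Rightarrow> 'g cg" where
  "cg_elem g = Poly_Mapping.single g 1"

text \<open>Embedding of G \<union> {0}: None stands for 0 (non-adjacency), Some g for g.\<close>
definition cg_opt :: "'g::group_add option \<Rightarrow> 'g cg" where
  "cg_opt x = (case x of None \<Rightarrow> 0 | Some g \<Rightarrow> cg_elem g)"

definition cg_scalar :: "complex \<Rightarrow> 'g::group_add cg" where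
  "cg_scalar c = Poly_Mapping.single 0 c"

definition conj_class :: "'g::group_add \<Rightarrow> 'g set" where
  "conj_class g = {h + g - h | h. True}"

definition cg_mu :: "'g::group_add cg \<Rightarrow> 'g \<Rightarrow> complex" where
  "cg_mu a g = (\<Sum>x \<in> Poly_Mapping.keys a \<inter> conj_class g. Poly_Mapping.lookup a x)"

definition mat_trace :: "'a::comm_monoid_add mat \<Rightarrow> 'a" where
  "mat_trace A = (\<Sum>i<dim_row A. A $$ (i, i))"

definition G_cospectral :: "'g::group_add cg mat \<Rightarrow> 'g cg mat \<Rightarrow> bool" where
  "G_cospectral A B \<longleftrightarrow> (\<forall>h::nat. h > 0 \<longrightarrow> cg_mu (mat_trace (A ^\<^sub>m h)) = cg_mu (mat_trace (B ^\<^sub>m h)))"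

text \<open>A G-gain graph on the vertex set {0..<n}: gg v w = Some g means v ~ w with
gain psi(v,w) = g; gg v w = None means v, w are not adjacent.\<close>
definition gain_graph :: "nat \<Rightarrow> (nat \<Rightarrow> nat \<Rightarrow> 'g::group_add option) \<Rightarrow> bool" where
  "gain_graph n gg \<longleftrightarrow>
     (\<forall>v<n. gg v v = None) \<and>
     (\<forall>v<n. \<forall>w<n. gg w v = map_option uminus (gg v w))"

definition adj_matrix :: "nat \<Rightarrow> (nat \<Rightarrow> nat \<Rightarrow> 'g::group_add option) \<Rightarrow> 'g cg mat" where
  "adj_matrix n gg = mat n n (\<lambda>(i, j). cg_opt (gg i j))"

text \<open>The vertices are ordered as C_0, C_1, ..., C_2k, so the partition is determined by
c0 = |C_0| and the list ms = [m_1, ..., m_k] with m_t = |C_(2t-1)| = |C_(2t)|. Block indices as in the paper: 0..2k.\<close>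

definition nverts :: "nat \<Rightarrow> nat list \<Rightarrow> nat" where
  "nverts c0 ms = c0 + 2 * sum_list ms"

text \<open>Start of the pair C_(2t+1), C_(2t+2) (t counted from 0).\<close>
definition pair_start :: "nat \<Rightarrow> nat list \<Rightarrow> nat \<Rightarrow> nat" where
  "pair_start c0 ms t = c0 + 2 * sum_list (take t ms)"

definition blk :: "nat \<Rightarrow> nat list \<Rightarrow> nat \<Rightarrow> nat set" where
  "blk c0 ms i =
     (if i = 0 then {0..<c0}
      else if i \<le> 2 * length ms then
        (let t = (i - 1) div 2; s = pair_start c0 ms t; m = ms ! t in
         if odd i then {s..<s + m} else {s + m..<s + 2 * m})
      else {})"

definition Psi :: "nat \<Rightarrow> nat list \<Rightarrow> (nat \<Rightarrow> nat \<Rightarrow> 'g::group_add option) \<Rightarrow> nat \<Rightarrow> nat \<Rightarrow> 'g cg" where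
  "Psi c0 ms gg i v = (\<Sum>w \<in> blk c0 ms i. cg_opt (gg v w))"

definition WQH :: "nat \<Rightarrow> nat list \<Rightarrow> (nat \<Rightarrow> nat \<Rightarrow> 'g::group_add option) \<Rightarrow> bool" where
  "WQH c0 ms gg \<longleftrightarrow>
     \<comment> \<open>(1) |C_i| = |C_(i+1)| for odd i holds by construction of blk\<close>
     \<comment> \<open>(2)\<close>
     (\<forall>i \<in> {1..2 * length ms}. \<forall>j \<in> {1..2 * length ms}. \<forall>v \<in> blk c0 ms i. \<forall>v' \<in> blk c0 ms i.
        Psi c0 ms gg j v = Psi c0 ms gg j v') \<and>
     \<comment> \<open>(3)\<close>
     (\<forall>i j. odd i \<and> i < 2 * length ms \<and> odd j \<and> j < 2 * length ms \<longrightarrow>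
        (\<forall>v \<in> blk c0 ms i. \<forall>v' \<in> blk c0 ms (i + 1).
           Psi c0 ms gg j v = Psi c0 ms gg (j + 1) v' \<and> Psi c0 ms gg (j + 1) v = Psi c0 ms gg j v')) \<and>
     \<comment> \<open>(4)\<close>
     (\<forall>v \<in> blk c0 ms 0. \<forall>i. odd i \<and> i < 2 * length ms \<longrightarrow>
        Psi c0 ms gg i v = Psi c0 ms gg (i + 1) v \<or>
        (\<exists>g1 g2. g1 \<noteq> g2 \<and>
           Psi c0 ms gg i v = cg_scalar (of_nat (card (blk c0 ms i))) * cg_opt g1 \<and>
           Psi c0 ms gg (i + 1) v = cg_scalar (of_nat (card (blk c0 ms (i + 1)))) * cg_opt g2))"

text \<open>For v in C_0 and w in C_i \<union> C_(i+1), i odd: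
unchanged if Psi_i(v) = Psi_(i+1)(v); otherwise (case (b)) with the elements g1, g2 of
G \<union> {0} from condition (4b), gains g2 towards C_i and g1 towards C_(i+1).
Arcs from C_1 \<union> ... \<union> C_2k into C_0 get the inverse gains.\<close>

definition case_b_pair :: "nat \<Rightarrow> nat list \<Rightarrow> (nat \<Rightarrow> nat \<Rightarrow> 'g::group_add option) \<Rightarrow> nat \<Rightarrow> nat \<Rightarrow> 'g option \<times> 'g option" where
  "case_b_pair c0 ms gg i v =
     (SOME (g1, g2). g1 \<noteq> g2 \<and>
        Psi c0 ms gg i v = cg_scalar (of_nat (card (blk c0 ms i))) * cg_opt g1 \<and>
        Psi c0 ms gg (i + 1) v = cg_scalar (of_nat (card (blk c0 ms (i + 1)))) * cg_opt g2)"

definition psi_from_C0 :: "nat \<Rightarrow> nat list \<Rightarrow> (nat \<Rightarrow> nat \<Rightarrow> 'g::group_add option) \<Rightarrow> nat \<Rightarrow> nat \<Rightarrow> 'g option" where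
  "psi_from_C0 c0 ms gg v w =
     (let i = (if odd (THE j. j \<noteq> 0 \<and> w \<in> blk c0 ms j) then (THE j. j \<noteq> 0 \<and> w \<in> blk c0 ms j)
               else (THE j. j \<noteq> 0 \<and> w \<in> blk c0 ms j) - 1) in
      if Psi c0 ms gg i v = Psi c0 ms gg (i + 1) v then gg v w
      else (let (g1, g2) = case_b_pair c0 ms gg i v in
            if w \<in> blk c0 ms i then g2 else g1))"

definition psi_alpha :: "nat \<Rightarrow> nat list \<Rightarrow> (nat \<Rightarrow> nat \<Rightarrow> 'g::group_add option) \<Rightarrow> nat \<Rightarrow> nat \<Rightarrow> 'g option" where
  "psi_alpha c0 ms gg v w =
     (if (v \<in> blk c0 ms 0) = (w \<in> blk c0 ms 0) then gg v w
      else if v \<in> blk c0 ms 0 then psi_from_C0 c0 ms gg v w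
      else map_option uminus (psi_from_C0 c0 ms gg w v))"

definition Q_block :: "nat \<Rightarrow> 'g::group_add cg mat" where
  "Q_block m = mat (2 * m) (2 * m) (\<lambda>(i, j).
      (if i = j then 1 else 0) +
      (if (i < m) = (j < m) then cg_scalar (- 1 / of_nat m) else cg_scalar (1 / of_nat m)))"

text \<open>Q_alpha = diag(I_|C_0|, Q_m1, ..., Q_mk), written entrywise.\<close>
definition Q_alpha :: "nat \<Rightarrow> nat list \<Rightarrow> 'g::group_add cg mat" where
  "Q_alpha c0 ms = mat (nverts c0 ms) (nverts c0 ms) (\<lambda>(i, j).
      if i < c0 \<or> j < c0 then (if i = j then 1 else 0)
      else (let t = (THE t. t < length ms \<and> pair_start c0 ms t \<le> i \<and> i < pair_start c0 ms (Suc t)) in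
            if pair_start c0 ms t \<le> j \<and> j < pair_start c0 ms (Suc t)
            then Q_block (ms ! t) $$ (i - pair_start c0 ms t, j - pair_start c0 ms t)
            else 0))"

end

theory Submission
  imports Defs
begin

text \<open>
  Q_alpha is an involution whose entries are complex multiples of 1_G, hence central in CG.
  Multiplying by Q_alpha on the left (right) adds to the entry in a row (column) x \<in> C_j, j \<ge> 1,
  the term 1/|C_j| times the difference between the column (row) sums over the partner block of
  C_j and over C_j itself.  Hence A_alpha = Q A Q is equivalent to Q A_alpha = A Q, which is checked
  entry by entry.  Between C_0 and a pair C_i, C_(i+1), case (a) of condition (4) changes neither
  side and case (b) is precisely the exchange of g_1 and g_2.  Inside C_1 \<union> ... \<union> C_2k, double
  counting the gains between two blocks, with conditions (2) and (3), yields the identity.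
  Cospectrality follows since (Q A Q)^h = Q A^h Q and conjugation by an involution with central
  entries preserves the trace.
\<close>

section \<open>The group algebra\<close>

lemma lookup_cg_opt: "Poly_Mapping.lookup (cg_opt x) k = of_bool (x = Some k)"
  by (cases x) (auto simp: cg_opt_def cg_elem_def lookup_single when_def)

lemma lookup_cg_scalar_mult:
  "Poly_Mapping.lookup (cg_scalar c * a) k = c * Poly_Mapping.lookup a k"
  by (simp add: cg_scalar_def lookup_mult lookup_single when_mult mult_when)

lemma lookup_mult_cg_scalar:
  fixes a :: "'g::group_add cg"
  shows "Poly_Mapping.lookup (a * cg_scalar c) k = Poly_Mapping.lookup a k * c"
proof -
  have "Sum_any (\<lambda>l. (c when l = 0) when k = h + l) = (c when k = h)" for h :: 'g
    by (subst when_commute) simp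
  then show ?thesis
    by (simp add: cg_scalar_def lookup_mult lookup_single mult_when)
qed

lemma cg_scalar_commute: "cg_scalar c * a = a * cg_scalar c"
  by (rule poly_mapping_eqI) (simp add: lookup_cg_scalar_mult lookup_mult_cg_scalar mult.commute)

lemma of_nat_eq_cg_scalar: "(of_nat m :: 'g::group_add cg) = cg_scalar (of_nat m)"
  by (simp add: cg_scalar_def)

lemma cg_scalar_cancel:
  fixes a b :: "'g::group_add cg"
  assumes "m \<noteq> 0" "m' \<noteq> 0" "of_nat m' * a = of_nat m * b"
  shows "cg_scalar (1 / of_nat m) * a = cg_scalar (1 / of_nat m') * b"
proof (rule poly_mapping_eqI)
  fix k
  have "of_nat m' * Poly_Mapping.lookup a k = of_nat m * Poly_Mapping.lookup b k"
    using arg_cong[OF assms(3), of "\<lambda>x. Poly_Mapping.lookup x k"]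
    by (simp add: of_nat_eq_cg_scalar lookup_cg_scalar_mult)
  then show "Poly_Mapping.lookup (cg_scalar (1 / of_nat m) * a) k =
      Poly_Mapping.lookup (cg_scalar (1 / of_nat m') * b) k"
    using assms(1,2) by (simp add: lookup_cg_scalar_mult field_simps)
qed

lemma cg_scalar_inverse_mult:
  "m \<noteq> 0 \<Longrightarrow> cg_scalar (1 / of_nat m) * (of_nat m * a) = (a :: 'g::group_add cg)"
  using cg_scalar_cancel[of m 1 "of_nat m * a" a] by (simp add: cg_scalar_def)

lemma cg_scalar_inverse_of_nat:
  "m \<noteq> 0 \<Longrightarrow> cg_scalar (1 / of_nat m) * of_nat m = (1 :: 'g::group_add cg)"
  using cg_scalar_inverse_mult[of m 1] by simp

lemma add_scaled_diff_cancel: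
  "m \<noteq> 0 \<Longrightarrow> x + cg_scalar (1 / of_nat m) * (of_nat m * y - of_nat m * x) = (y :: 'g::group_add cg)"
  by (simp add: right_diff_distrib cg_scalar_inverse_mult)

lemma lookup_sum_cg_opt:
  "finite S \<Longrightarrow> Poly_Mapping.lookup (\<Sum>w\<in>S. cg_opt (f w)) k = of_nat (card {w\<in>S. f w = Some k})"
  by (simp add: lookup_sum lookup_cg_opt Int_def conj_commute)

lemma sum_cg_opt_inverse_cong:
  fixes f f' :: "'a \<Rightarrow> 'g::group_add option"
  assumes "finite S" "finite S'" "(\<Sum>w\<in>S. cg_opt (f w)) = (\<Sum>w\<in>S'. cg_opt (f' w))"
  shows "(\<Sum>w\<in>S. cg_opt (map_option uminus (f w))) = (\<Sum>w\<in>S'. cg_opt (map_option uminus (f' w)))"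
proof (rule poly_mapping_eqI)
  fix k :: 'g
  have inv: "map_option uminus x = Some k \<longleftrightarrow> x = Some (- k)" for x :: "'g option"
    by (cases x) (auto simp: minus_equation_iff)
  show "Poly_Mapping.lookup (\<Sum>w\<in>S. cg_opt (map_option uminus (f w))) k =
      Poly_Mapping.lookup (\<Sum>w\<in>S'. cg_opt (map_option uminus (f' w))) k"
    using arg_cong[OF assms(3), of "\<lambda>x. Poly_Mapping.lookup x (- k)"]
    by (simp only: lookup_sum_cg_opt assms(1,2) inv)
qed

lemma sum_cg_opt_eq_card_imp_const:
  assumes "finite S" "(\<Sum>w\<in>S. cg_opt (f w)) = cg_scalar (of_nat (card S)) * cg_opt g" "w \<in> S"
  shows "f w = g"
proof (cases g)
  case None
  then have "card {w\<in>S. f w = Some k} = 0" for k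
    using arg_cong[OF assms(2), of "\<lambda>x. Poly_Mapping.lookup x k"] assms(1)
    by (simp add: lookup_sum_cg_opt lookup_cg_scalar_mult cg_opt_def[of None])
  then show ?thesis
    using None assms(1,3) by (cases "f w") auto
next
  case (Some h)
  then have "card {w\<in>S. f w = Some h} = card S"
    using arg_cong[OF assms(2), of "\<lambda>x. Poly_Mapping.lookup x h"] assms(1)
    by (simp add: lookup_sum_cg_opt lookup_cg_scalar_mult lookup_cg_opt)
  then have "{w\<in>S. f w = Some h} = S"
    using assms(1) by (metis (no_types, lifting) card_subset_eq mem_Collect_eq subsetI)
  then show ?thesis
    using Some assms(3) by blast
qed

section \<open>Conjugation by a central involution\<close>

lemma index_mult_mat_sum:
  "A \<in> carrier_mat nr n \<Longrightarrow> B \<in> carrier_mat n nc \<Longrightarrow> i < nr \<Longrightarrow> j < nc \<Longrightarrow>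
    (A * B) $$ (i, j) = (\<Sum>k = 0..<n. A $$ (i, k) * B $$ (k, j))"
  by (simp add: scalar_prod_def)

lemma mat_trace_mult_commute:
  fixes A B :: "'a::semiring_0 mat"
  assumes A: "A \<in> carrier_mat n n" and B: "B \<in> carrier_mat n n"
    and central: "\<And>i j x. i < n \<Longrightarrow> j < n \<Longrightarrow> B $$ (i, j) * x = x * B $$ (i, j)"
  shows "mat_trace (A * B) = mat_trace (B * A)"
proof -
  have "mat_trace (A * B) = (\<Sum>i<n. \<Sum>k<n. A $$ (i, k) * B $$ (k, i))"
    using A B by (simp add: mat_trace_def scalar_prod_def lessThan_atLeast0)
  also have "\<dots> = (\<Sum>k<n. \<Sum>i<n. B $$ (k, i) * A $$ (i, k))"
    by (subst sum.swap) (simp add: central)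
  also have "\<dots> = mat_trace (B * A)"
    using A B by (simp add: mat_trace_def scalar_prod_def lessThan_atLeast0)
  finally show ?thesis .
qed

lemma mat_trace_conj_involution:
  fixes Q M :: "'a::semiring_1 mat"
  assumes Q: "Q \<in> carrier_mat n n" and M: "M \<in> carrier_mat n n" and QQ: "Q * Q = 1\<^sub>m n"
    and central: "\<And>i j x. i < n \<Longrightarrow> j < n \<Longrightarrow> Q $$ (i, j) * x = x * Q $$ (i, j)"
  shows "mat_trace (Q * M * Q) = mat_trace M"
proof -
  have "mat_trace (Q * M * Q) = mat_trace (Q * (Q * M))"
    using Q M central by (intro mat_trace_mult_commute) auto
  also have "Q * (Q * M) = M"
    using Q M QQ by (simp flip: assoc_mult_mat[OF Q Q M])
  finally show ?thesis .
qed

lemma pow_conj_involution: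
  fixes Q A :: "'a::semiring_1 mat"
  assumes Q: "Q \<in> carrier_mat n n" and A: "A \<in> carrier_mat n n" and QQ: "Q * Q = 1\<^sub>m n"
  shows "(Q * A * Q) ^\<^sub>m h = Q * A ^\<^sub>m h * Q"
proof (induction h)
  case 0
  show ?case using Q A QQ by simp
next
  case (Suc h)
  have "(Q * A * Q) ^\<^sub>m Suc h = (Q * A ^\<^sub>m h * Q) * (Q * A * Q)"
    by (simp only: pow_mat.simps Suc.IH)
  also have "\<dots> = Q * A ^\<^sub>m h * (Q * Q) * A * Q"
    using Q A by (simp add: assoc_mult_mat[of _ n n _ n _ n] mult_carrier_mat[of _ n n _ n])
  also have "\<dots> = Q * A ^\<^sub>m Suc h * Q"
    using Q A QQ by (simp add: assoc_mult_mat[of _ n n _ n _ n] mult_carrier_mat[of _ n n _ n])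
  finally show ?case .
qed

lemma G_cospectral_conj_involution:
  assumes Q: "Q \<in> carrier_mat n n" and A: "A \<in> carrier_mat n n" and QQ: "Q * Q = 1\<^sub>m n"
    and central: "\<And>i j x. i < n \<Longrightarrow> j < n \<Longrightarrow> Q $$ (i, j) * x = x * Q $$ (i, j)"
  shows "G_cospectral A (Q * A * Q)"
  unfolding G_cospectral_def
  using mat_trace_conj_involution[OF Q _ QQ central] pow_conj_involution[OF Q A QQ] A by simp

section \<open>The blocks C_0, ..., C_2k and the matrix Q_alpha\<close>

text \<open>C_j and C_(partner j) are the two blocks C_i, C_(i+1) (i odd) of one pair.\<close>
definition partner :: "nat \<Rightarrow> nat" where
  "partner j = (if odd j then j + 1 else j - 1)"

text \<open>The same THE-term as in psi_from_C0, so that that definition can be folded.\<close>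
definition blk_index :: "nat \<Rightarrow> nat list \<Rightarrow> nat \<Rightarrow> nat" where
  "blk_index c0 ms v = (THE j. j \<noteq> 0 \<and> v \<in> blk c0 ms j)"

lemma partner_nonzero: "j \<noteq> 0 \<Longrightarrow> partner j \<noteq> 0"
  and partner_partner: "j \<noteq> 0 \<Longrightarrow> partner (partner j) = j"
  and partner_neq: "j \<noteq> 0 \<Longrightarrow> partner j \<noteq> j"
  by (auto simp: partner_def)

lemma ex_interval_containing:
  fixes f :: "nat \<Rightarrow> nat"
  assumes "f 0 \<le> x" "x < f k"
  shows "\<exists>t<k. f t \<le> x \<and> x < f (Suc t)"
  using assms(2)
proof (induction k)
  case (Suc k)
  then show ?case
    using assms(1) by (cases "x < f k") (auto intro: less_SucI)
qed (use assms(1) in simp)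

locale vertex_blocks =
  fixes c0 :: nat and ms :: "nat list"
begin

abbreviation "C \<equiv> blk c0 ms"
abbreviation "idx \<equiv> blk_index c0 ms"
abbreviation inv_card :: "nat \<Rightarrow> 'g::group_add cg" where
  "inv_card j \<equiv> cg_scalar (1 / of_nat (card (C j)))"

lemma pair_start_Suc: "t < length ms \<Longrightarrow> pair_start c0 ms (Suc t) = pair_start c0 ms t + 2 * ms ! t"
  by (simp add: pair_start_def take_Suc_conv_app_nth)

lemma pair_start_mono: "t \<le> t' \<Longrightarrow> pair_start c0 ms t \<le> pair_start c0 ms t'"
  using append_take_drop_id[of t "take t' ms"] 
  by (simp add: pair_start_def min_absorb1) (metis le_add1 sum_list_append)

lemma pair_start_0: "pair_start c0 ms 0 = c0"
  by (simp add: pair_start_def)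

lemma pair_start_length: "pair_start c0 ms (length ms) = nverts c0 ms"
  by (simp add: pair_start_def nverts_def)

lemma pair_unique:
  assumes "pair_start c0 ms t \<le> v" "v < pair_start c0 ms (Suc t)"
    and "pair_start c0 ms t' \<le> v" "v < pair_start c0 ms (Suc t')"
  shows "t = t'"
  using pair_start_mono[of "Suc t" t'] pair_start_mono[of "Suc t'" t] assms
  by (metis le_less_trans linorder_neqE_nat not_less_eq_eq not_less)

lemma pair_exists:
  assumes "c0 \<le> v" "v < nverts c0 ms"
  obtains t where "t < length ms" "pair_start c0 ms t \<le> v" "v < pair_start c0 ms (Suc t)"
  using ex_interval_containing[of "pair_start c0 ms" v "length ms"] assms that
  by (auto simp: pair_start_0 pair_start_length)

lemma blk_0: "C 0 = {0..<c0}"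
  by (simp add: blk_def)

lemma blk_odd: "t < length ms \<Longrightarrow> C (2 * t + 1) = {pair_start c0 ms t..<pair_start c0 ms t + ms ! t}"
  by (simp add: blk_def Let_def)

lemma blk_even: "t < length ms \<Longrightarrow> C (2 * t + 2) = {pair_start c0 ms t + ms ! t..<pair_start c0 ms (Suc t)}"
  by (simp add: blk_def Let_def pair_start_Suc)

lemma blk_beyond: "2 * length ms < j \<Longrightarrow> C j = {}"
  by (simp add: blk_def)

lemma finite_blk: "finite (C j)"
  by (simp add: blk_def Let_def)

lemma nonzero_blk_cases:
  assumes "j \<noteq> 0" "j \<le> 2 * length ms"
  obtains t where "t < length ms" "j = 2 * t + 1" "partner j = 2 * t + 2"
    | t where "t < length ms" "j = 2 * t + 2" "partner j = 2 * t + 1"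
proof -
  define t where "t = (j - 1) div 2"
  have "t < length ms" "j = 2 * t + 1 \<or> j = 2 * t + 2"
    using assms unfolding t_def by presburger+
  then show ?thesis
    using that by (auto simp: partner_def)
qed

lemma blk_le_length: "v \<in> C j \<Longrightarrow> j \<le> 2 * length ms"
  using blk_beyond by (metis empty_iff not_le)

lemma blk_pair:
  assumes "j \<noteq> 0" "v \<in> C j"
  obtains t where "t < length ms" "pair_start c0 ms t \<le> v" "v < pair_start c0 ms (Suc t)"
    "j = 2 * t + 1 \<or> j = 2 * t + 2"
proof (rule nonzero_blk_cases[OF assms(1) blk_le_length[OF assms(2)]])
  fix t assume "t < length ms" "j = 2 * t + 1"
  then show ?thesis
    using that assms(2) blk_odd[of t] pair_start_Suc[of t] by auto
next
  fix t assume "t < length ms" "j = 2 * t + 2"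
  then show ?thesis
    using that assms(2) blk_even[of t] pair_start_Suc[of t] by auto
qed

lemma blk_range:
  assumes "j \<noteq> 0" "v \<in> C j"
  shows "c0 \<le> v" "v < nverts c0 ms"
proof -
  obtain t where "t < length ms" "pair_start c0 ms t \<le> v" "v < pair_start c0 ms (Suc t)"
    using blk_pair[OF assms] .
  moreover have "c0 \<le> pair_start c0 ms t"
    using pair_start_mono[of 0 t] by (simp add: pair_start_0)
  moreover have "pair_start c0 ms (Suc t) \<le> nverts c0 ms"
    using pair_start_mono[of "Suc t" "length ms"] \<open>t < length ms\<close> by (simp add: pair_start_length)
  ultimately show "c0 \<le> v" "v < nverts c0 ms"
    by linarith+
qed

lemma blk_subset: "C j \<subseteq> {0..<nverts c0 ms}"
  using blk_range by (cases "j = 0") (auto simp: blk_0 nverts_def)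

lemma blk_lt_nverts: "v \<in> C j \<Longrightarrow> v < nverts c0 ms"
  using blk_subset[of j] by auto

lemma blk_disjoint: "v \<in> C j \<Longrightarrow> v \<in> C j' \<Longrightarrow> j = j'"
proof (cases "j = 0 \<or> j' = 0")
  case True
  then show "v \<in> C j \<Longrightarrow> v \<in> C j' \<Longrightarrow> j = j'"
    using blk_range[of j v] blk_range[of j' v] by (fastforce simp: blk_0)
next
  case False
  assume v: "v \<in> C j" "v \<in> C j'"
  obtain t where t: "pair_start c0 ms t \<le> v" "v < pair_start c0 ms (Suc t)" "t < length ms"
    "j = 2 * t + 1 \<or> j = 2 * t + 2"
    using blk_pair[of j v] False v(1) by blast
  obtain t' where t': "pair_start c0 ms t' \<le> v" "v < pair_start c0 ms (Suc t')"
    "j' = 2 * t' + 1 \<or> j' = 2 * t' + 2"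
    using blk_pair[of j' v] False v(2) by blast
  have "t' = t"
    using pair_unique t t' by blast
  then show "j = j'"
    using t t' v blk_odd[OF t(3)] blk_even[OF t(3)] by auto
qed

lemma blk_inter: "C j \<inter> C j' = (if j = j' then C j else {})"
  using blk_disjoint by auto

lemma blk_covers:
  assumes "c0 \<le> v" "v < nverts c0 ms"
  obtains j where "j \<noteq> 0" "v \<in> C j"
proof -
  obtain t where "t < length ms" "pair_start c0 ms t \<le> v" "v < pair_start c0 ms (Suc t)"
    using pair_exists assms by blast
  then show ?thesis
    using that[of "2 * t + 1"] that[of "2 * t + 2"] blk_odd blk_even by force
qed

lemma blk_index_eq: "j \<noteq> 0 \<Longrightarrow> v \<in> C j \<Longrightarrow> idx v = j"
  unfolding blk_index_def by (blast intro: the_equality blk_disjoint)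

lemma blk_index_mem:
  assumes "c0 \<le> v" "v < nverts c0 ms"
  shows "idx v \<noteq> 0" "v \<in> C (idx v)"
  using blk_covers[OF assms] blk_index_eq by metis+

lemma card_blk_partner: "j \<noteq> 0 \<Longrightarrow> card (C (partner j)) = card (C j)"
proof (cases "j \<le> 2 * length ms")
  case True
  assume "j \<noteq> 0"
  then show ?thesis
  proof (rule nonzero_blk_cases[OF _ True])
    fix t assume "t < length ms" "j = 2 * t + 1" "partner j = 2 * t + 2"
    then show ?thesis using blk_odd[of t] blk_even[of t] pair_start_Suc[of t] by simp
  next
    fix t assume "t < length ms" "j = 2 * t + 2" "partner j = 2 * t + 1"
    then show ?thesis using blk_odd[of t] blk_even[of t] pair_start_Suc[of t] by simp
  qed
next
  case False
  then have "2 * length ms < partner j"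
    unfolding partner_def by presburger
  then show ?thesis
    using False by (simp add: blk_beyond)
qed

lemma blk_partner_nonempty: "j \<noteq> 0 \<Longrightarrow> v \<in> C j \<Longrightarrow> C (partner j) \<noteq> {}"
  using card_blk_partner[of j] finite_blk[of j] by force

lemma mem_blk_iff_index: "c0 \<le> u \<Longrightarrow> u < nverts c0 ms \<Longrightarrow> j \<noteq> 0 \<Longrightarrow> u \<in> C j \<longleftrightarrow> idx u = j"
  using blk_index_eq blk_index_mem by metis

lemma Q_block_entry:
  assumes "a < 2 * m" "b < 2 * m"
  shows "Q_block m $$ (a, b) = of_bool (a = b) +
    cg_scalar (1 / of_nat m) * (of_bool ((a < m) \<noteq> (b < m)) - of_bool ((a < m) = (b < m)))"
  using assms by (simp add: Q_block_def cg_scalar_def single_uminus)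

lemma pair_blk_members:
  assumes "t < length ms" "j = 2 * t + 1 \<or> j = 2 * t + 2" "v \<in> C j"
  defines "s \<equiv> pair_start c0 ms t" and "m \<equiv> ms ! t"
  shows "card (C j) = m"
    and "x \<in> C j \<longleftrightarrow> x \<in> {s..<s + 2 * m} \<and> (v - s < m \<longleftrightarrow> x - s < m)"
    and "x \<in> C (partner j) \<longleftrightarrow> x \<in> {s..<s + 2 * m} \<and> (v - s < m \<longleftrightarrow> \<not> x - s < m)"
  using assms blk_odd[OF assms(1)] blk_even[OF assms(1)] pair_start_Suc[OF assms(1)]
  by (auto simp: partner_def)

lemma Q_alpha_entry:
  assumes "v < nverts c0 ms" "u < nverts c0 ms"
  shows "Q_alpha c0 ms $$ (v, u) = of_bool (v = u) + (if c0 \<le> v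
    then inv_card (idx v) * (of_bool (u \<in> C (partner (idx v))) - of_bool (u \<in> C (idx v))) else 0)"
proof (cases "c0 \<le> v \<and> c0 \<le> u")
  case False
  moreover have "u \<notin> C j" if "u < c0" "j \<noteq> 0" for j
    using blk_range(1)[OF that(2)] that(1) by (meson not_le)
  ultimately show ?thesis
    using assms blk_index_mem[of v] partner_nonzero by (auto simp: Q_alpha_def)
next
  case vu: True
  define j where "j = idx v"
  have j: "j \<noteq> 0" "v \<in> C j"
    using blk_index_mem vu assms unfolding j_def by auto
  obtain t where t: "t < length ms" "pair_start c0 ms t \<le> v" "v < pair_start c0 ms (Suc t)"
    "j = 2 * t + 1 \<or> j = 2 * t + 2"
    using blk_pair[OF j] .
  have "(THE t. t < length ms \<and> pair_start c0 ms t \<le> v \<and> v < pair_start c0 ms (Suc t)) = t"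
    using t pair_unique by blast
  then have Q: "Q_alpha c0 ms $$ (v, u) = (if pair_start c0 ms t \<le> u \<and> u < pair_start c0 ms (Suc t)
      then Q_block (ms ! t) $$ (v - pair_start c0 ms t, u - pair_start c0 ms t) else 0)"
    using vu assms by (simp add: Q_alpha_def)
  define s m where "s = pair_start c0 ms t" and "m = ms ! t"
  note blks = pair_blk_members[OF t(1,4) j(2), folded s_def m_def]
  have pair: "pair_start c0 ms (Suc t) = s + 2 * m"
    using pair_start_Suc[OF t(1)] unfolding s_def m_def .
  have v_range: "s \<le> v" "v - s < 2 * m"
    using t(2,3) pair unfolding s_def by auto
  show ?thesis
  proof (cases "u \<in> {s..<s + 2 * m}")
    case True
    then have "v - s = u - s \<longleftrightarrow> v = u" "u - s < 2 * m"
      using v_range by auto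
    then have "Q_alpha c0 ms $$ (v, u) = of_bool (v = u) + cg_scalar (1 / of_nat m) *
        (of_bool ((v - s < m) \<noteq> (u - s < m)) - of_bool ((v - s < m) = (u - s < m)))"
      using Q True pair v_range unfolding s_def[symmetric] m_def[symmetric]
      by (simp add: Q_block_entry)
    then show ?thesis
      using vu True blks unfolding j_def[symmetric] by simp
  next
    case False
    then have "v \<noteq> u"
      using v_range by auto
    moreover have "u \<notin> C j" "u \<notin> C (partner j)"
      using blks False by auto
    moreover have "Q_alpha c0 ms $$ (v, u) = 0"
      unfolding Q using False pair unfolding s_def[symmetric] m_def[symmetric] by auto
    ultimately show ?thesis
      unfolding j_def[symmetric] by simp
  qed
qed

lemma Q_alpha_mult_row:
  fixes X :: "nat \<Rightarrow> 'g::group_add cg"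
  assumes v: "v < nverts c0 ms"
  shows "(\<Sum>u = 0..<nverts c0 ms. Q_alpha c0 ms $$ (v, u) * X u) = X v + (if c0 \<le> v
    then inv_card (idx v) * (sum X (C (partner (idx v))) - sum X (C (idx v))) else 0)"
proof -
  have restrict: "(\<Sum>u = 0..<nverts c0 ms. of_bool (u \<in> S) * X u) = sum X S"
    if "S \<subseteq> {0..<nverts c0 ms}" for S
    by (simp add: inf.absorb2[OF that])
  have "(\<Sum>u = 0..<nverts c0 ms. Q_alpha c0 ms $$ (v, u) * X u) =
      (\<Sum>u = 0..<nverts c0 ms. of_bool (u \<in> {v}) * X u) + (if c0 \<le> v then inv_card (idx v) *
        ((\<Sum>u = 0..<nverts c0 ms. of_bool (u \<in> C (partner (idx v))) * X u) -
         (\<Sum>u = 0..<nverts c0 ms. of_bool (u \<in> C (idx v)) * X u)) else 0)"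
    using v by (simp add: Q_alpha_entry distrib_right sum.distrib mult.assoc left_diff_distrib
        sum_subtractf eq_commute[of v] flip: sum_distrib_left)
  then show ?thesis
    using v by (simp only: restrict blk_subset) simp
qed

lemma Q_alpha_symmetric:
  assumes v: "v < nverts c0 ms" and u: "u < nverts c0 ms"
  shows "Q_alpha c0 ms $$ (v, u) = Q_alpha c0 ms $$ (u, v)"
proof (cases "c0 \<le> v \<and> c0 \<le> u")
  case False
  moreover have "x \<notin> C j" if "x < c0" "j \<noteq> 0" for x j
    using blk_range(1)[OF that(2)] that(1) by (meson not_le)
  ultimately show ?thesis
    using v u blk_index_mem partner_nonzero by (auto simp: Q_alpha_entry)
next
  case True
  define j l where "j = idx v" and "l = idx u"
  have jl: "j \<noteq> 0" "l \<noteq> 0"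
    using blk_index_mem True v u unfolding j_def l_def by auto
  have partner_iff: "u \<in> C (partner j) \<longleftrightarrow> v \<in> C (partner l)"
    using jl True v u partner_partner partner_nonzero
    unfolding j_def l_def by (metis mem_blk_iff_index)
  have same_iff: "u \<in> C j \<longleftrightarrow> v \<in> C l"
    using jl True v u unfolding j_def l_def by (metis mem_blk_iff_index)
  show ?thesis
  proof (cases "u \<in> C (partner j) \<or> u \<in> C j")
    case True
    then have "card (C l) = card (C j)"
      using jl card_blk_partner blk_index_eq partner_nonzero unfolding l_def by metis
    then show ?thesis
      using v u \<open>c0 \<le> v \<and> c0 \<le> u\<close> partner_iff same_iff
      by (simp add: Q_alpha_entry j_def[symmetric] l_def[symmetric])
  next
    case False
    then show ?thesis
      using v u \<open>c0 \<le> v \<and> c0 \<le> u\<close> partner_iff same_iff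
      by (simp add: Q_alpha_entry j_def[symmetric] l_def[symmetric])
  qed
qed

lemma Q_alpha_entry_central:
  assumes "v < nverts c0 ms" "u < nverts c0 ms"
  shows "Q_alpha c0 ms $$ (v, u) * x = x * Q_alpha c0 ms $$ (v, u)"
  using assms by (simp add: Q_alpha_entry algebra_simps cg_scalar_commute of_bool_def)

lemma mult_Q_alpha_col:
  fixes X :: "nat \<Rightarrow> 'g::group_add cg"
  assumes w: "w < nverts c0 ms"
  shows "(\<Sum>u = 0..<nverts c0 ms. X u * Q_alpha c0 ms $$ (u, w)) = X w + (if c0 \<le> w
    then inv_card (idx w) * (sum X (C (partner (idx w))) - sum X (C (idx w))) else 0)"
proof -
  have "(\<Sum>u = 0..<nverts c0 ms. X u * Q_alpha c0 ms $$ (u, w)) =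
      (\<Sum>u = 0..<nverts c0 ms. Q_alpha c0 ms $$ (w, u) * X u)"
    using w by (intro sum.cong refl) (simp add: Q_alpha_entry_central Q_alpha_symmetric)
  then show ?thesis
    using Q_alpha_mult_row[OF w, of X] by simp
qed

lemma Q_alpha_carrier: "Q_alpha c0 ms \<in> carrier_mat (nverts c0 ms) (nverts c0 ms)"
  by (simp add: Q_alpha_def)

lemma Q_alpha_mult_entry:
  fixes M :: "'g::group_add cg mat"
  assumes M: "M \<in> carrier_mat (nverts c0 ms) (nverts c0 ms)"
    and vw: "v < nverts c0 ms" "w < nverts c0 ms"
  shows "(Q_alpha c0 ms * M) $$ (v, w) = M $$ (v, w) + (if c0 \<le> v then inv_card (idx v) *
    ((\<Sum>u\<in>C (partner (idx v)). M $$ (u, w)) - (\<Sum>u\<in>C (idx v). M $$ (u, w))) else 0)"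
  using Q_alpha_mult_row[OF vw(1), of "\<lambda>u. M $$ (u, w)"]
  by (simp add: index_mult_mat_sum[OF Q_alpha_carrier M vw])

lemma mult_Q_alpha_entry:
  fixes M :: "'g::group_add cg mat"
  assumes M: "M \<in> carrier_mat (nverts c0 ms) (nverts c0 ms)"
    and vw: "v < nverts c0 ms" "w < nverts c0 ms"
  shows "(M * Q_alpha c0 ms) $$ (v, w) = M $$ (v, w) + (if c0 \<le> w then inv_card (idx w) *
    ((\<Sum>u\<in>C (partner (idx w)). M $$ (v, u)) - (\<Sum>u\<in>C (idx w). M $$ (v, u))) else 0)"
  using mult_Q_alpha_col[OF vw(2), of "\<lambda>u. M $$ (v, u)"]
  by (simp add: index_mult_mat_sum[OF M Q_alpha_carrier vw])

lemma sum_Q_alpha_blk_column: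
  assumes i: "i \<noteq> 0" and w: "w < nverts c0 ms"
  shows "(\<Sum>u\<in>C i. Q_alpha c0 ms $$ (u, w)) = (of_bool (w \<in> C (partner i)) :: 'g::group_add cg)"
proof -
  have "(\<Sum>u\<in>C i. Q_alpha c0 ms $$ (u, w)) =
      (\<Sum>u = 0..<nverts c0 ms. Q_alpha c0 ms $$ (w, u) * of_bool (u \<in> C i))"
  proof -
    have "{0..<nverts c0 ms} \<inter> C i = C i"
      using blk_subset[of i] by blast
    then show ?thesis
      using blk_subset[of i] w by (simp add: Q_alpha_symmetric subset_eq)
  qed
  also have "\<dots> = of_bool (w \<in> C i) + (if c0 \<le> w then inv_card (idx w) *
      (of_nat (card (C (partner (idx w)) \<inter> C i)) - of_nat (card (C (idx w) \<inter> C i))) else 0)"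
    by (simp only: Q_alpha_mult_row[OF w, of "\<lambda>u. of_bool (u \<in> C i)"]) (simp add: finite_blk)
  also have "\<dots> = of_bool (w \<in> C (partner i))"
  proof (cases "c0 \<le> w")
    case False
    then have "w \<notin> C i" "w \<notin> C (partner i)"
      using blk_range(1)[OF i] blk_range(1)[OF partner_nonzero[OF i]] by (meson not_le)+
    then show ?thesis
      using False by simp
  next
    case True
    define l where "l = idx w"
    have l: "l \<noteq> 0" "card (C l) \<noteq> 0" and mem: "\<And>k. k \<noteq> 0 \<Longrightarrow> w \<in> C k \<longleftrightarrow> k = l"
      using blk_index_mem[OF True w] finite_blk[of l] mem_blk_iff_index[OF True w]
      unfolding l_def by (auto simp: card_eq_0_iff)
    have "i = l \<or> i = partner l \<or> (i \<noteq> l \<and> partner i \<noteq> l \<and> partner l \<noteq> i)"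
      using partner_partner[OF i] by auto
    then show ?thesis
      using True mem[OF i] mem[OF partner_nonzero[OF i]] partner_neq[OF l(1)]
        partner_partner[OF l(1)] card_blk_partner[OF l(1)] unfolding l_def[symmetric]
      by (auto simp: blk_inter right_diff_distrib cg_scalar_inverse_of_nat[OF l(2)])
  qed
  finally show ?thesis .
qed

lemma Q_alpha_involution:
  "Q_alpha c0 ms * Q_alpha c0 ms = (1\<^sub>m (nverts c0 ms) :: 'g::group_add cg mat)"
proof (rule eq_matI)
  fix v w
  assume "v < dim_row (1\<^sub>m (nverts c0 ms) :: 'g cg mat)" "w < dim_col (1\<^sub>m (nverts c0 ms) :: 'g cg mat)"
  then have vw: "v < nverts c0 ms" "w < nverts c0 ms"
    by auto
  show "(Q_alpha c0 ms * Q_alpha c0 ms) $$ (v, w) = (1\<^sub>m (nverts c0 ms) :: 'g cg mat) $$ (v, w)"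
  proof (cases "c0 \<le> v")
    case True
    then have "idx v \<noteq> 0"
      using blk_index_mem vw(1) by blast
    then show ?thesis
      using True vw by (simp add: Q_alpha_mult_entry Q_alpha_carrier sum_Q_alpha_blk_column
          partner_nonzero partner_partner Q_alpha_entry algebra_simps)
  next
    case False
    then show ?thesis
      using vw by (simp add: Q_alpha_mult_entry Q_alpha_carrier Q_alpha_entry)
  qed
qed (simp_all add: Q_alpha_def)

end

section \<open>Gain graphs with a WQH partition\<close>

lemma adj_matrix_carrier: "adj_matrix n f \<in> carrier_mat n n"
  by (simp add: adj_matrix_def)

lemma adj_matrix_entry: "u < n \<Longrightarrow> w < n \<Longrightarrow> adj_matrix n f $$ (u, w) = cg_opt (f u w)"
  by (simp add: adj_matrix_def)

locale wqh_gain_graph = vertex_blocks +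
  fixes gg :: "nat \<Rightarrow> nat \<Rightarrow> 'g::group_add option"
  assumes gain_graph: "gain_graph (nverts c0 ms) gg"
    and wqh: "WQH c0 ms gg"
begin

abbreviation "\<Psi> \<equiv> Psi c0 ms gg"
abbreviation "gg_alpha \<equiv> psi_alpha c0 ms gg"

lemma gain_inverse: "v < nverts c0 ms \<Longrightarrow> w < nverts c0 ms \<Longrightarrow> gg w v = map_option uminus (gg v w)"
  using gain_graph unfolding gain_graph_def by blast

lemma Psi_const_on_blk:
  assumes "i \<noteq> 0" "j \<noteq> 0" "v \<in> C i" "v' \<in> C i"
  shows "\<Psi> j v = \<Psi> j v'"
proof (cases "j \<le> 2 * length ms")
  case True
  then have "i \<in> {1..2 * length ms}" "j \<in> {1..2 * length ms}"
    using assms(1,2) blk_le_length[OF assms(3)] by auto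
  then show ?thesis
    using wqh assms(3,4) unfolding WQH_def by blast
next
  case False
  then show ?thesis
    by (simp add: Psi_def blk_beyond)
qed

lemma Psi_partner_swap:
  assumes j: "j \<noteq> 0" "v \<in> C j" "v' \<in> C (partner j)" and l: "l \<noteq> 0"
  shows "\<Psi> l v' = \<Psi> (partner l) v"
proof (cases "l \<le> 2 * length ms")
  case False
  then have "2 * length ms < partner l"
    unfolding partner_def by presburger
  then show ?thesis
    using False by (simp add: Psi_def blk_beyond)
next
  case True
  have swap: "\<Psi> k x = \<Psi> (k + 1) x' \<and> \<Psi> (k + 1) x = \<Psi> k x'"
    if "odd i" "i < 2 * length ms" "odd k" "k < 2 * length ms" "x \<in> C i" "x' \<in> C (i + 1)" for i k x x'
    using wqh that unfolding WQH_def by blast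
  show ?thesis
  proof (rule nonzero_blk_cases[OF j(1) blk_le_length[OF j(2)]])
    fix t assume t: "t < length ms" "j = 2 * t + 1" "partner j = 2 * t + 2"
    show ?thesis
      by (rule nonzero_blk_cases[OF l True]) (use swap[of j] t j in auto)
  next
    fix t assume t: "t < length ms" "j = 2 * t + 2" "partner j = 2 * t + 1"
    show ?thesis
      by (rule nonzero_blk_cases[OF l True]) (use swap[of "partner j"] t j in auto)
  qed
qed

lemma psi_alpha_same_side: "(v < c0 \<longleftrightarrow> w < c0) \<Longrightarrow> gg_alpha v w = gg v w"
  by (simp add: psi_alpha_def blk_0)

lemma psi_alpha_from_C0: "v < c0 \<Longrightarrow> c0 \<le> w \<Longrightarrow> gg_alpha v w = psi_from_C0 c0 ms gg v w"
  by (simp add: psi_alpha_def blk_0)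

lemma psi_alpha_to_C0: "c0 \<le> v \<Longrightarrow> w < c0 \<Longrightarrow> gg_alpha v w = map_option uminus (gg_alpha w v)"
  by (simp add: psi_alpha_def blk_0)

lemma case_b_pair_gains:
  assumes "v < c0" "odd i" "i < 2 * length ms" "\<Psi> i v \<noteq> \<Psi> (i + 1) v"
  shows "\<forall>u\<in>C i. gg v u = fst (case_b_pair c0 ms gg i v)"
    "\<forall>u\<in>C (i + 1). gg v u = snd (case_b_pair c0 ms gg i v)"
proof -
  let ?P = "\<lambda>(g1, g2). g1 \<noteq> g2 \<and>
    \<Psi> i v = cg_scalar (of_nat (card (C i))) * cg_opt g1 \<and>
    \<Psi> (i + 1) v = cg_scalar (of_nat (card (C (i + 1)))) * cg_opt g2"
  have "\<exists>p. ?P p"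
    using wqh assms unfolding WQH_def blk_0 by auto
  then have "?P (case_b_pair c0 ms gg i v)"
    unfolding case_b_pair_def by (rule someI_ex)
  then show "\<forall>u\<in>C i. gg v u = fst (case_b_pair c0 ms gg i v)"
    "\<forall>u\<in>C (i + 1). gg v u = snd (case_b_pair c0 ms gg i v)"
    using sum_cg_opt_eq_card_imp_const[OF finite_blk] unfolding Psi_def by (auto simp: split_beta)
qed

lemma psi_from_C0_pair:
  assumes "odd i" "u \<in> C i \<union> C (i + 1)"
  shows "psi_from_C0 c0 ms gg v u = (if \<Psi> i v = \<Psi> (i + 1) v then gg v u
    else if u \<in> C i then snd (case_b_pair c0 ms gg i v) else fst (case_b_pair c0 ms gg i v))"
proof -
  have "idx u = i \<or> idx u = i + 1"
    using assms blk_index_eq by (metis Un_iff add_is_0 odd_pos not_gr0 zero_neq_one)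
  then have "(if odd (idx u) then idx u else idx u - 1) = i"
    using assms(1) by auto
  then show ?thesis
    unfolding psi_from_C0_def blk_index_def[symmetric] by (simp add: split_beta)
qed

lemma psi_alpha_pair_cases_odd:
  assumes v: "v < c0" and i: "odd i" "i < 2 * length ms"
  obtains (unchanged) "\<Psi> i v = \<Psi> (i + 1) v" "\<forall>u\<in>C i \<union> C (i + 1). gg_alpha v u = gg v u"
    | (swapped) g g' where "\<forall>u\<in>C i. gg v u = g \<and> gg_alpha v u = g'"
      "\<forall>u\<in>C (i + 1). gg v u = g' \<and> gg_alpha v u = g"
proof -
  have "i \<noteq> 0" "i + 1 \<noteq> 0"
    using odd_pos[OF i(1)] by auto
  then have alpha: "gg_alpha v u = psi_from_C0 c0 ms gg v u" if "u \<in> C i \<union> C (i + 1)" for u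
    using that v blk_range(1) psi_alpha_from_C0 by blast
  show ?thesis
  proof (cases "\<Psi> i v = \<Psi> (i + 1) v")
    case True
    then show ?thesis
      using unchanged alpha psi_from_C0_pair[OF i(1)] by simp
  next
    case False
    have "u \<notin> C i" if "u \<in> C (i + 1)" for u
      using blk_disjoint[OF that] by force
    then show ?thesis
      using swapped[of "fst (case_b_pair c0 ms gg i v)" "snd (case_b_pair c0 ms gg i v)"]
        alpha psi_from_C0_pair[OF i(1)] case_b_pair_gains[OF v i False] False by simp
  qed
qed

lemma psi_alpha_pair_cases:
  assumes v: "v < c0" and j: "j \<noteq> 0" "j \<le> 2 * length ms"
  obtains (unchanged) "\<Psi> j v = \<Psi> (partner j) v"
      "\<forall>u\<in>C j \<union> C (partner j). gg_alpha v u = gg v u"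
    | (swapped) g g' where "\<forall>u\<in>C j. gg v u = g \<and> gg_alpha v u = g'"
      "\<forall>u\<in>C (partner j). gg v u = g' \<and> gg_alpha v u = g"
proof (rule nonzero_blk_cases[OF j])
  fix t assume "t < length ms" "j = 2 * t + 1" "partner j = 2 * t + 2"
  then show ?thesis
    using psi_alpha_pair_cases_odd[OF v, of j] unchanged swapped by auto
next
  fix t assume t: "t < length ms" "j = 2 * t + 2" "partner j = 2 * t + 1"
  then have i: "odd (partner j)" "partner j < 2 * length ms" "partner j + 1 = j"
    by auto
  show ?thesis
  proof (rule psi_alpha_pair_cases_odd[OF v i(1,2)])
    assume "\<Psi> (partner j) v = \<Psi> (partner j + 1) v"
      "\<forall>u\<in>C (partner j) \<union> C (partner j + 1). gg_alpha v u = gg v u"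
    then show ?thesis
      using that(1) i(3) by (simp add: Un_commute)
  next
    fix g g'
    assume "\<forall>u\<in>C (partner j). gg v u = g \<and> gg_alpha v u = g'"
      "\<forall>u\<in>C (partner j + 1). gg v u = g' \<and> gg_alpha v u = g"
    then show ?thesis
      using that(2)[of g' g] i(3) by simp
  qed
qed

lemma psi_alpha_row_C0:
  assumes v: "v < c0" and w: "c0 \<le> w" "w < nverts c0 ms"
  shows "cg_opt (gg_alpha v w) = cg_opt (gg v w) + inv_card (idx w) * (\<Psi> (partner (idx w)) v - \<Psi> (idx w) v)"
proof -
  define j where "j = idx w"
  have j: "j \<noteq> 0" "w \<in> C j" "j \<le> 2 * length ms" "card (C j) \<noteq> 0"
    using blk_index_mem[OF w] blk_le_length finite_blk unfolding j_def by (auto simp: card_eq_0_iff)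
  from v j(1,3) show ?thesis
  proof (cases rule: psi_alpha_pair_cases)
    case unchanged
    then show ?thesis
      using j(2) unfolding j_def[symmetric] by simp
  next
    case (swapped g g')
    then have "\<Psi> j v = of_nat (card (C j)) * cg_opt g" "\<Psi> (partner j) v = of_nat (card (C j)) * cg_opt g'"
      "gg v w = g" "gg_alpha v w = g'"
      using card_blk_partner[OF j(1)] j(2) unfolding Psi_def by simp_all
    then show ?thesis
      unfolding j_def[symmetric] by (simp only:) (rule add_scaled_diff_cancel[OF j(4), symmetric])
  qed
qed

lemma blk_column_sum_eq:
  assumes "\<Psi> i w = \<Psi> i' w'" "w < nverts c0 ms" "w' < nverts c0 ms"
  shows "(\<Sum>u\<in>C i. cg_opt (gg u w)) = (\<Sum>u\<in>C i'. cg_opt (gg u w'))"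
proof -
  have "(\<Sum>u\<in>C k. cg_opt (gg u x)) = (\<Sum>u\<in>C k. cg_opt (map_option uminus (gg x u)))"
    if "x < nverts c0 ms" for k x
  proof (rule sum.cong[OF refl])
    fix u assume "u \<in> C k"
    then show "cg_opt (gg u x) = cg_opt (map_option uminus (gg x u))"
      using gain_inverse[OF that blk_lt_nverts] by simp
  qed
  note column_by_row = this
  show ?thesis
    unfolding column_by_row[OF assms(2)] column_by_row[OF assms(3)]
    by (rule sum_cg_opt_inverse_cong[OF finite_blk finite_blk assms(1)[unfolded Psi_def]])
qed

lemma psi_alpha_column_C0:
  assumes v: "c0 \<le> v" "v < nverts c0 ms" and w: "w < c0"
  shows "cg_opt (gg_alpha v w) + inv_card (idx v) * ((\<Sum>u\<in>C (partner (idx v)). cg_opt (gg_alpha u w))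
    - (\<Sum>u\<in>C (idx v). cg_opt (gg_alpha u w))) = cg_opt (gg v w)"
proof -
  define j where "j = idx v"
  have j: "j \<noteq> 0" "v \<in> C j" "j \<le> 2 * length ms" "card (C j) \<noteq> 0"
    using blk_index_mem[OF v] blk_le_length finite_blk unfolding j_def by (auto simp: card_eq_0_iff)
  have w_n: "w < nverts c0 ms"
    using w v by simp
  have alpha: "gg_alpha u w = map_option uminus (gg_alpha w u)" if u: "u \<in> C j \<union> C (partner j)" for u
  proof -
    have "c0 \<le> u"
      using u blk_range(1) j(1) partner_nonzero[OF j(1)] by blast
    then show ?thesis
      using psi_alpha_to_C0 w by blast
  qed
  from w j(1,3) show ?thesis
  proof (cases rule: psi_alpha_pair_cases)
    case unchanged
    have "gg_alpha u w = gg u w" if u: "u \<in> C j \<union> C (partner j)" for u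
    proof -
      have "u < nverts c0 ms"
        using u blk_lt_nverts by auto
      then show ?thesis
        using alpha[OF u] unchanged(2) u gain_inverse[OF w_n] by simp
    qed
    moreover have "(\<Sum>u\<in>C (partner j). cg_opt (gg u w)) = (\<Sum>u\<in>C j. cg_opt (gg u w))"
      using blk_column_sum_eq[OF unchanged(1)[symmetric] w_n w_n] .
    ultimately show ?thesis
      using j(2) unfolding j_def[symmetric] by simp
  next
    case (swapped g g')
    then have "(\<Sum>u\<in>C j. cg_opt (gg_alpha u w)) = of_nat (card (C j)) * cg_opt (map_option uminus g')"
      "(\<Sum>u\<in>C (partner j). cg_opt (gg_alpha u w)) = of_nat (card (C j)) * cg_opt (map_option uminus g)"
      "gg v w = map_option uminus g" "gg_alpha v w = map_option uminus g'"
      using alpha card_blk_partner[OF j(1)] j(2) gain_inverse[OF w_n v(2)]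
      by simp_all
    then show ?thesis
      unfolding j_def[symmetric] by (simp only:) (rule add_scaled_diff_cancel[OF j(4)])
  qed
qed

lemma blk_column_sum_double_count:
  assumes "i \<noteq> 0" "j \<noteq> 0" "w \<in> C j" "v \<in> C i"
  shows "of_nat (card (C j)) * (\<Sum>u\<in>C i. cg_opt (gg u w)) = of_nat (card (C i)) * \<Psi> j v"
proof -
  have "(\<Sum>u\<in>C i. cg_opt (gg u w')) = (\<Sum>u\<in>C i. cg_opt (gg u w))" if "w' \<in> C j" for w'
    using Psi_const_on_blk[OF assms(2,1) that assms(3)] blk_lt_nverts that assms(3)
    by (intro blk_column_sum_eq) auto
  then have "of_nat (card (C j)) * (\<Sum>u\<in>C i. cg_opt (gg u w)) = (\<Sum>w'\<in>C j. \<Sum>u\<in>C i. cg_opt (gg u w'))"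
    by simp
  also have "\<dots> = (\<Sum>u\<in>C i. \<Psi> j u)"
    unfolding Psi_def by (rule sum.swap)
  also have "\<dots> = (\<Sum>u\<in>C i. \<Psi> j v)"
    using Psi_const_on_blk[OF assms(1,2) _ assms(4)] by (intro sum.cong) auto
  also have "\<dots> = of_nat (card (C i)) * \<Psi> j v"
    by simp
  finally show ?thesis .
qed

lemma blk_column_sum_diff:
  assumes v: "c0 \<le> v" "v < nverts c0 ms" and w: "c0 \<le> w" "w < nverts c0 ms"
  shows "inv_card (idx v) * ((\<Sum>u\<in>C (partner (idx v)). cg_opt (gg u w)) - (\<Sum>u\<in>C (idx v). cg_opt (gg u w)))
    = inv_card (idx w) * (\<Psi> (partner (idx w)) v - \<Psi> (idx w) v)"
proof -
  define i j where "i = idx v" and "j = idx w"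
  have i: "i \<noteq> 0" "v \<in> C i" "card (C i) \<noteq> 0"
    using blk_index_mem[OF v] finite_blk unfolding i_def by (auto simp: card_eq_0_iff)
  have j: "j \<noteq> 0" "w \<in> C j" "card (C j) \<noteq> 0"
    using blk_index_mem[OF w] finite_blk unfolding j_def by (auto simp: card_eq_0_iff)
  obtain v' where v': "v' \<in> C (partner i)"
    using blk_partner_nonempty[OF i(1,2)] by blast
  have "of_nat (card (C j)) * (\<Sum>u\<in>C (partner i). cg_opt (gg u w)) = of_nat (card (C i)) * \<Psi> (partner j) v"
    using blk_column_sum_double_count[OF partner_nonzero[OF i(1)] j(1,2) v']
      card_blk_partner[OF i(1)] Psi_partner_swap[OF i(1,2) v' j(1)] by simp
  moreover have "of_nat (card (C j)) * (\<Sum>u\<in>C i. cg_opt (gg u w)) = of_nat (card (C i)) * \<Psi> j v"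
    using blk_column_sum_double_count[OF i(1) j(1,2) i(2)] .
  ultimately show ?thesis
    unfolding i_def[symmetric] j_def[symmetric]
    by (intro cg_scalar_cancel[OF i(3) j(3)]) (simp add: right_diff_distrib)
qed

lemma Q_alpha_mult_adj_alpha:
  "Q_alpha c0 ms * adj_matrix (nverts c0 ms) gg_alpha = adj_matrix (nverts c0 ms) gg * Q_alpha c0 ms"
proof (rule eq_matI)
  fix v w
  assume "v < dim_row (adj_matrix (nverts c0 ms) gg * Q_alpha c0 ms)"
    "w < dim_col (adj_matrix (nverts c0 ms) gg * Q_alpha c0 ms)"
  then have vw: "v < nverts c0 ms" "w < nverts c0 ms"
    by (simp_all add: adj_matrix_def Q_alpha_def)
  have col: "(\<Sum>u\<in>C k. adj_matrix (nverts c0 ms) f $$ (u, w)) = (\<Sum>u\<in>C k. cg_opt (f u w))" for k f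
    using vw(2) blk_lt_nverts by (intro sum.cong) (auto simp: adj_matrix_entry)
  have row: "(\<Sum>u\<in>C k. adj_matrix (nverts c0 ms) gg $$ (v, u)) = \<Psi> k v" for k
    using vw(1) blk_lt_nverts unfolding Psi_def by (intro sum.cong) (auto simp: adj_matrix_entry)
  have nonzero_idx: "idx x \<noteq> 0 \<and> partner (idx x) \<noteq> 0" if "c0 \<le> x" "x < nverts c0 ms" for x
    using blk_index_mem[OF that] partner_nonzero by blast
  have alpha_outer: "(\<Sum>u\<in>C k. cg_opt (gg_alpha u w)) = (\<Sum>u\<in>C k. cg_opt (gg u w))"
    if "k \<noteq> 0" "c0 \<le> w" for k
    using that blk_range(1) psi_alpha_same_side by (intro sum.cong) (auto simp: not_less)
  have lhs: "(Q_alpha c0 ms * adj_matrix (nverts c0 ms) gg_alpha) $$ (v, w) = cg_opt (gg_alpha v w) +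
      (if c0 \<le> v then inv_card (idx v) * ((\<Sum>u\<in>C (partner (idx v)). cg_opt (gg_alpha u w))
        - (\<Sum>u\<in>C (idx v). cg_opt (gg_alpha u w))) else 0)"
    using vw by (simp add: Q_alpha_mult_entry[OF adj_matrix_carrier vw] col adj_matrix_entry)
  have rhs: "(adj_matrix (nverts c0 ms) gg * Q_alpha c0 ms) $$ (v, w) = cg_opt (gg v w) +
      (if c0 \<le> w then inv_card (idx w) * (\<Psi> (partner (idx w)) v - \<Psi> (idx w) v) else 0)"
    using vw by (simp add: mult_Q_alpha_entry[OF adj_matrix_carrier vw] row adj_matrix_entry)
  show "(Q_alpha c0 ms * adj_matrix (nverts c0 ms) gg_alpha) $$ (v, w) =
      (adj_matrix (nverts c0 ms) gg * Q_alpha c0 ms) $$ (v, w)"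
  proof (cases "c0 \<le> v"; cases "c0 \<le> w")
    assume "c0 \<le> v" "c0 \<le> w"
    then show ?thesis
      using vw nonzero_idx alpha_outer blk_column_sum_diff psi_alpha_same_side[of v w] by (simp add: lhs rhs)
  next
    assume "c0 \<le> v" "\<not> c0 \<le> w"
    then show ?thesis
      using vw psi_alpha_column_C0 by (simp add: lhs rhs)
  next
    assume "\<not> c0 \<le> v" "c0 \<le> w"
    then show ?thesis
      using vw psi_alpha_row_C0 by (simp add: lhs rhs)
  next
    assume "\<not> c0 \<le> v" "\<not> c0 \<le> w"
    then show ?thesis
      using vw psi_alpha_same_side by (simp add: lhs rhs)
  qed
qed (simp_all add: adj_matrix_def Q_alpha_def)

end

theorem mainTheorem2:
  fixes gg :: "nat \<Rightarrow> nat \<Rightarrow> 'g::group_add option"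
    and c0 :: nat and ms :: "nat list"
  assumes "gain_graph (nverts c0 ms) gg"
    and "\<forall>m \<in> set ms. m \<ge> 1"
    and "WQH c0 ms gg"
  shows "adj_matrix (nverts c0 ms) (psi_alpha c0 ms gg)
           = Q_alpha c0 ms * adj_matrix (nverts c0 ms) gg * Q_alpha c0 ms
         \<and> G_cospectral (adj_matrix (nverts c0 ms) gg) (adj_matrix (nverts c0 ms) (psi_alpha c0 ms gg))"
proof -
  interpret wqh_gain_graph c0 ms gg
    using assms(1,3) by unfold_locales
  let ?n = "nverts c0 ms" and ?Q = "Q_alpha c0 ms :: 'g cg mat"
  let ?A = "adj_matrix ?n gg" and ?A' = "adj_matrix ?n gg_alpha"
  have "?A' = (?Q * ?Q) * ?A'"
    by (simp add: Q_alpha_involution adj_matrix_def)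
  also have "\<dots> = ?Q * (?Q * ?A')"
    by (rule assoc_mult_mat[OF Q_alpha_carrier Q_alpha_carrier adj_matrix_carrier])
  also have "\<dots> = ?Q * ?A * ?Q"
    unfolding Q_alpha_mult_adj_alpha
    by (rule assoc_mult_mat[symmetric, OF Q_alpha_carrier adj_matrix_carrier Q_alpha_carrier])
  finally have conj: "?A' = ?Q * ?A * ?Q" .
  have "G_cospectral ?A (?Q * ?A * ?Q)"
    using Q_alpha_carrier adj_matrix_carrier Q_alpha_involution Q_alpha_entry_central
    by (rule G_cospectral_conj_involution)
  with conj show ?thesis
    by simp
qed

end
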